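(* For every integer $d\ge 1$ there is a finite graph which is not a $d$-sphere graph; equivalently, there is a finite graph of sphere dimension greater than $d$.
   Context: Let $\mathbb{D}^d=\{x\in\mathbb{R}^{d+1}: |x|\le 1\}$ and $\mathcal{H}_d=\{\mathbb{D}^d\cap H: H \text{ a hyperplane of } \mathbb{R}^{d+1}\text{ meeting the interior of }\mathbb{D}^d\}$. A $d$-sphere graph is an intersection graph of a subfamily of $\mathcal{H}_d$. For $d\ge 2$ these are exactly the intersection graphs of families of spheres in $\mathbb{R}^d$; for $d=1$ they are the circle graphs. The sphere dimension of a graph is the least $d$ such that it is a $d$-sphere graph. *)

theory Defs
  imports "HOL-Analysis.Analysis"
begin

text \<open>The family H_d: intersections of the closed unit ball of the ambient
Euclidean space (of dimension d+1) with a hyperplane a.x = b (a nonzero)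
that meets the open unit ball.\<close>
definition hyperplane_sections :: "'a::euclidean_space set set" where
  "hyperplane_sections =
     {cball 0 1 \<inter> {x. a \<bullet> x = b} | a b.
        a \<noteq> 0 \<and> {x. a \<bullet> x = b} \<inter> ball 0 1 \<noteq> {}}"

definition is_sphere_graph :: "'a::euclidean_space itself \<Rightarrow> 'v set \<Rightarrow> ('v \<Rightarrow> 'v \<Rightarrow> bool) \<Rightarrow> bool" where
  "is_sphere_graph _ V E \<longleftrightarrow>
     (\<exists>f :: 'v \<Rightarrow> 'a set. inj_on f V \<and> f ` V \<subseteq> hyperplane_sections \<and>
        (\<forall>u\<in>V. \<forall>v\<in>V. u \<noteq> v \<longrightarrow> (E u v \<longleftrightarrow> f u \<inter> f v \<noteq> {})))"

end

theory Submission
  imports Defs "HOL-Library.Function_Algebras" "HOL-Library.Nat_Bijection"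
begin

text \<open>Normalise every section to \<open>cball 0 1 \<inter> {x. a \<bullet> x = b}\<close> with \<open>norm a = 1\<close>. Two such sections
  meet iff \<open>(a \<bullet> a')\<^sup>2 - 2 b b' (a \<bullet> a') + b\<^sup>2 + b'\<^sup>2 \<le> 1\<close>, so the neighbourhood of a vertex is
  cut out by the signs of functions of \<open>(a, b)\<close> that lie in one fixed space of dimension
  \<open>D\<^sup>2 + D + 2\<close>, where \<open>D\<close> is the ambient dimension. Such a space cannot realise all sign
  patterns on more functions than its dimension. Hence in a sphere graph, among
  \<open>D\<^sup>2 + D + 3\<close> vertices some subset is the neighbourhood of no further vertex, while the
  incidence graph of a set of that size and its subsets realises every subset.\<close>

lemma hyperplane_section_normalized:
  fixes S :: "'a::euclidean_space set"
  assumes "S \<in> hyperplane_sections"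
  obtains a b where "norm a = 1" "\<bar>b\<bar> < 1" "S = cball 0 1 \<inter> {x. a \<bullet> x = b}"
proof -
  obtain a b where ab: "S = cball 0 1 \<inter> {x. a \<bullet> x = b}" "a \<noteq> 0"
      "{x. a \<bullet> x = b} \<inter> ball 0 1 \<noteq> {}"
    using assms unfolding hyperplane_sections_def by blast
  then obtain y where y: "a \<bullet> y = b" "norm y < 1" by (force simp: dist_norm)
  define a' where "a' = (1 / norm a) *\<^sub>R a"
  define b' where "b' = b / norm a"
  have "norm a' = 1" unfolding a'_def using ab(2) by simp
  moreover have eq: "a' \<bullet> x = b' \<longleftrightarrow> a \<bullet> x = b" for x
    unfolding a'_def b'_def using ab(2) by (auto simp: field_simps)
  moreover have "\<bar>b'\<bar> < 1"
  proof -
    have "\<bar>b'\<bar> \<le> norm a' * norm y" using Cauchy_Schwarz_ineq2 eq[of y] y(1) by metis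
    also have "\<dots> < 1" using \<open>norm a' = 1\<close> y(2) by simp
    finally show ?thesis .
  qed
  moreover have "S = cball 0 1 \<inter> {x. a' \<bullet> x = b'}" using ab(1) eq by auto
  ultimately show thesis using that by blast
qed

lemma least_norm_point_two_hyperplanes:
  fixes a1 a2 :: "'a::euclidean_space"
  assumes "norm a1 = 1" "norm a2 = 1" and c: "(a1 \<bullet> a2)\<^sup>2 \<noteq> 1"
  obtains x0 where "a1 \<bullet> x0 = b1" "a2 \<bullet> x0 = b2"
    "x0 \<bullet> x0 = (b1\<^sup>2 + b2\<^sup>2 - 2 * (a1 \<bullet> a2) * b1 * b2) / (1 - (a1 \<bullet> a2)\<^sup>2)"
    "\<And>x. a1 \<bullet> x = b1 \<Longrightarrow> a2 \<bullet> x = b2 \<Longrightarrow> x0 \<bullet> x0 \<le> x \<bullet> x"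
proof -
  define c where "c = a1 \<bullet> a2"
  define \<alpha> where "\<alpha> = (b1 - c * b2) / (1 - c\<^sup>2)"
  define \<beta> where "\<beta> = (b2 - c * b1) / (1 - c\<^sup>2)"
  define x0 where "x0 = \<alpha> *\<^sub>R a1 + \<beta> *\<^sub>R a2"
  have d: "1 - c\<^sup>2 \<noteq> 0" using c by (simp add: c_def)
  have "a1 \<bullet> a1 = 1" "a2 \<bullet> a2 = 1" using assms by (simp_all add: dot_square_norm)
  then have x0_a: "a1 \<bullet> x0 = \<alpha> + \<beta> * c" "a2 \<bullet> x0 = \<alpha> * c + \<beta>"
    by (simp_all add: x0_def c_def inner_add_right inner_commute)
  have "\<alpha> + \<beta> * c = ((b1 - c * b2) + (b2 - c * b1) * c) / (1 - c\<^sup>2)"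
       "\<alpha> * c + \<beta> = ((b1 - c * b2) * c + (b2 - c * b1)) / (1 - c\<^sup>2)"
    by (simp_all add: \<alpha>_def \<beta>_def add_divide_distrib)
  moreover have "(b1 - c * b2) + (b2 - c * b1) * c = b1 * (1 - c\<^sup>2)"
       "(b1 - c * b2) * c + (b2 - c * b1) = b2 * (1 - c\<^sup>2)"
    by (simp_all add: algebra_simps power2_eq_square)
  ultimately have 1: "a1 \<bullet> x0 = b1" "a2 \<bullet> x0 = b2"
    using d unfolding x0_a by simp_all
  have x0_x: "x0 \<bullet> x = \<alpha> * b1 + \<beta> * b2" if "a1 \<bullet> x = b1" "a2 \<bullet> x = b2" for x
    using that by (simp add: x0_def inner_add_left)
  have "x0 \<bullet> x0 = ((b1 - c * b2) * b1 + (b2 - c * b1) * b2) / (1 - c\<^sup>2)"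
    by (simp add: x0_x[OF 1] \<alpha>_def \<beta>_def add_divide_distrib)
  also have "(b1 - c * b2) * b1 + (b2 - c * b1) * b2 = b1\<^sup>2 + b2\<^sup>2 - 2 * c * b1 * b2"
    by (simp add: algebra_simps power2_eq_square)
  finally have "x0 \<bullet> x0 = (b1\<^sup>2 + b2\<^sup>2 - 2 * c * b1 * b2) / (1 - c\<^sup>2)" .
  moreover have "x0 \<bullet> x0 \<le> x \<bullet> x" if "a1 \<bullet> x = b1" "a2 \<bullet> x = b2" for x
  proof -
    \<comment> \<open>\<open>x - x0\<close> is orthogonal to \<open>x0\<close>, which lies in the span of the normals\<close>
    have "0 \<le> (x - x0) \<bullet> (x - x0)" by simp
    also have "\<dots> = x \<bullet> x - x0 \<bullet> x0"
      using x0_x[OF that] x0_x[OF 1] by (simp add: inner_diff_left inner_diff_right inner_commute)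
    finally show ?thesis by simp
  qed
  ultimately show thesis using that 1 unfolding c_def by blast
qed

lemma parallel_if_inner_square_eq_1:
  fixes a1 a2 :: "'a::real_inner"
  assumes "norm a1 = 1" "norm a2 = 1" "(a1 \<bullet> a2)\<^sup>2 = 1"
  shows "a1 = (a1 \<bullet> a2) *\<^sub>R a2"
proof -
  have "a1 \<bullet> a1 = 1" "a2 \<bullet> a2 = 1" using assms by (simp_all add: dot_square_norm)
  then have "(a1 - (a1 \<bullet> a2) *\<^sub>R a2) \<bullet> (a1 - (a1 \<bullet> a2) *\<^sub>R a2) = 1 - (a1 \<bullet> a2)\<^sup>2"
    by (simp add: inner_diff_left inner_diff_right inner_commute power2_eq_square)
  then show ?thesis using assms(3) by simp
qed

lemma cball_meets_two_hyperplanes_iff: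
  fixes a1 a2 :: "'a::euclidean_space"
  assumes a: "norm a1 = 1" "norm a2 = 1" and "\<bar>b1\<bar> \<le> 1"
  shows "(\<exists>x. norm x \<le> 1 \<and> a1 \<bullet> x = b1 \<and> a2 \<bullet> x = b2) \<longleftrightarrow>
         (a1 \<bullet> a2)\<^sup>2 - 2 * b1 * b2 * (a1 \<bullet> a2) + b1\<^sup>2 + b2\<^sup>2 \<le> 1"
proof -
  let ?c = "a1 \<bullet> a2"
  show ?thesis
  proof (cases "?c\<^sup>2 = 1")
    case True
    have par: "a1 = ?c *\<^sub>R a2" using parallel_if_inner_square_eq_1[OF a True] .
    have "a2 \<bullet> a2 = 1" using a by (simp add: dot_square_norm)
    then have "a2 \<bullet> (b1 *\<^sub>R a1) = b2 \<longleftrightarrow> b1 = ?c * b2"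
      using True by (subst par) (auto simp: power2_eq_square algebra_simps)
    moreover have "a1 \<bullet> (b1 *\<^sub>R a1) = b1" "norm (b1 *\<^sub>R a1) \<le> 1"
      using a assms(3) by (simp_all add: dot_square_norm)
    moreover have "a1 \<bullet> x = b1 \<Longrightarrow> a2 \<bullet> x = b2 \<Longrightarrow> b1 = ?c * b2" for x
      by (subst (asm) par) simp
    moreover have "?c\<^sup>2 - 2 * b1 * b2 * ?c + b1\<^sup>2 + b2\<^sup>2 - 1 = (b1 - ?c * b2)\<^sup>2"
      using True by (simp add: power2_eq_square algebra_simps)
    ultimately show ?thesis by (smt (verit) power2_less_eq_zero_iff)
  next
    case False
    have d: "0 < 1 - ?c\<^sup>2"
      using Cauchy_Schwarz_ineq2[of a1 a2] a False abs_square_le_1[of ?c] by simp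
    obtain x0 where x0: "a1 \<bullet> x0 = b1" "a2 \<bullet> x0 = b2"
        "x0 \<bullet> x0 = (b1\<^sup>2 + b2\<^sup>2 - 2 * ?c * b1 * b2) / (1 - ?c\<^sup>2)"
        "\<And>x. a1 \<bullet> x = b1 \<Longrightarrow> a2 \<bullet> x = b2 \<Longrightarrow> x0 \<bullet> x0 \<le> x \<bullet> x"
      using least_norm_point_two_hyperplanes[OF a False] by blast
    have "(\<exists>x. norm x \<le> 1 \<and> a1 \<bullet> x = b1 \<and> a2 \<bullet> x = b2) \<longleftrightarrow> x0 \<bullet> x0 \<le> 1"
      using x0 by (force simp: norm_le_square)
    also have "\<dots> \<longleftrightarrow> ?c\<^sup>2 - 2 * b1 * b2 * ?c + b1\<^sup>2 + b2\<^sup>2 \<le> 1"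
      using d by (simp add: x0(3) divide_le_eq algebra_simps)
    finally show ?thesis .
  qed
qed

definition fun_scale :: "real \<Rightarrow> ('p \<Rightarrow> real) \<Rightarrow> 'p \<Rightarrow> real" where
  "fun_scale r f = (\<lambda>x. r * f x)"

interpretation real_fun: vector_space "fun_scale :: real \<Rightarrow> ('p \<Rightarrow> real) \<Rightarrow> _"
  by unfold_locales (auto simp: fun_scale_def fun_eq_iff algebra_simps)

lemma sum_fun_apply: "(\<Sum>v\<in>A. g v) x = (\<Sum>v\<in>A. g v x)"
  for g :: "'v \<Rightarrow> 'p \<Rightarrow> 'c::comm_monoid_add"
  by (induction A rule: infinite_finite_induct) auto

lemma nontrivial_linear_relation:
  fixes \<phi> :: "'v \<Rightarrow> 'p \<Rightarrow> real"
  assumes "finite A" "finite W" "card W < card A" "\<phi> ` A \<subseteq> real_fun.span W"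
  obtains l where "\<exists>v\<in>A. l v \<noteq> 0" "\<And>x. (\<Sum>v\<in>A. l v * \<phi> v x) = 0"
proof (cases "inj_on \<phi> A")
  case True
  have "real_fun.dependent (\<phi> ` A)"
  proof (rule ccontr)
    assume "real_fun.independent (\<phi> ` A)"
    from real_fun.independent_span_bound[OF assms(2) this assms(4)]
    show False using card_image[OF True] assms(3) by simp
  qed
  then obtain u where u: "\<exists>w\<in>\<phi> ` A. u w \<noteq> 0" "(\<Sum>w\<in>\<phi> ` A. fun_scale (u w) w) = 0"
    using real_fun.dependent_finite assms(1) by blast
  have "(\<Sum>v\<in>A. fun_scale (u (\<phi> v)) (\<phi> v)) = 0"
    using u(2) by (simp add: sum.reindex[OF True])
  then have "(\<Sum>v\<in>A. u (\<phi> v) * \<phi> v x) = 0" for x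
    by (simp add: fun_eq_iff sum_fun_apply fun_scale_def)
  moreover have "\<exists>v\<in>A. u (\<phi> v) \<noteq> 0" using u(1) by blast
  ultimately show thesis using that[of "\<lambda>v. u (\<phi> v)"] by blast
next
  case False
  then obtain a b where ab: "a \<in> A" "b \<in> A" "a \<noteq> b" "\<phi> a = \<phi> b" unfolding inj_on_def by blast
  define l where "l v = (if v = a then 1 else if v = b then -1 else (0::real))" for v
  have "(\<Sum>v\<in>A. l v * \<phi> v x) = (\<Sum>v\<in>{a,b}. l v * \<phi> v x)" for x
    by (rule sum.mono_neutral_right) (use assms(1) ab in \<open>auto simp: l_def\<close>)
  then have "(\<Sum>v\<in>A. l v * \<phi> v x) = 0" for x
    using ab by (simp add: l_def)
  moreover have "l a \<noteq> 0" by (simp add: l_def)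
  ultimately show thesis using that ab(1) by blast
qed

text \<open>The signs of a nontrivial linear relation among the \<open>\<phi> v\<close> give the missing pattern.\<close>
lemma span_misses_sign_pattern:
  fixes \<phi> :: "'v \<Rightarrow> 'p \<Rightarrow> real"
  assumes A: "finite A" and "finite W" "card W < card A" "\<phi> ` A \<subseteq> real_fun.span W"
  obtains I where "I \<subseteq> A" "\<And>x. {v\<in>A. \<phi> v x \<le> 0} \<noteq> I"
proof -
  obtain l where l: "\<exists>v\<in>A. l v < 0" "\<And>x. (\<Sum>v\<in>A. l v * \<phi> v x) = 0"
  proof -
    obtain l where l: "\<exists>v\<in>A. l v \<noteq> 0" "\<And>x. (\<Sum>v\<in>A. l v * \<phi> v x) = 0"
      using nontrivial_linear_relation assms by blast
    show thesis
    proof (cases "\<exists>v\<in>A. l v < 0")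
      case True
      then show thesis using that l(2) by blast
    next
      case False
      have "(\<Sum>v\<in>A. - l v * \<phi> v x) = 0" for x
        using l(2)[of x] by (simp add: sum_negf)
      moreover have "\<exists>v\<in>A. - l v < 0" using False l(1) by force
      ultimately show thesis using that[of "\<lambda>v. - l v"] by blast
    qed
  qed
  then obtain v0 where v0: "v0 \<in> A" "l v0 < 0" by blast
  define I where "I = {v\<in>A. 0 < l v}"
  have "{v\<in>A. \<phi> v x \<le> 0} \<noteq> I" for x
  proof
    assume pattern: "{v\<in>A. \<phi> v x \<le> 0} = I"
    have sign: "\<phi> v x \<le> 0 \<longleftrightarrow> 0 < l v" if "v \<in> A" for v
      using pattern that unfolding I_def by blast
    have "0 \<le> - (l v * \<phi> v x)" if "v \<in> A" for v
    proof (cases "0 < l v")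
      case True
      then show ?thesis using sign[OF that] by (simp add: mult_nonneg_nonpos)
    next
      case False
      then show ?thesis using sign[OF that] by (simp add: mult_nonpos_nonneg)
    qed
    moreover have "0 < - (l v0 * \<phi> v0 x)"
      using sign[OF v0(1)] v0(2) by (simp add: mult_neg_pos)
    ultimately have "0 < (\<Sum>v\<in>A. - (l v * \<phi> v x))"
      by (rule sum_pos2[OF A v0(1), rotated])
    then show False using l(2)[of x] by (simp add: sum_negf)
  qed
  moreover have "I \<subseteq> A" unfolding I_def by blast
  ultimately show thesis using that by blast
qed

text \<open>Evaluated at \<open>(a', b', b'\<^sup>2 - 1)\<close>, this is the left side minus the right side of the
  criterion in \<open>cball_meets_two_hyperplanes_iff\<close>; the coordinate \<open>s\<close> absorbs the term that
  depends on the second section alone.\<close>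
definition section_form :: "'a::euclidean_space \<Rightarrow> real \<Rightarrow> 'a \<times> real \<times> real \<Rightarrow> real" where
  "section_form a b = (\<lambda>(x, t, s). (a \<bullet> x)\<^sup>2 - 2 * t * b * (a \<bullet> x) + b\<^sup>2 + s)"

definition quadratic_features :: "('a::euclidean_space \<times> real \<times> real \<Rightarrow> real) set" where
  "quadratic_features =
     (\<lambda>(i, j) (x, t, s). (x \<bullet> i) * (x \<bullet> j)) ` (Basis \<times> Basis) \<union>
     (\<lambda>i (x, t, s). t * (x \<bullet> i)) ` Basis \<union> {\<lambda>_. 1, \<lambda>(x, t, s). s}"

lemma finite_quadratic_features: "finite quadratic_features"
  unfolding quadratic_features_def by simp

lemma card_quadratic_features:
  "card (quadratic_features :: ('a::euclidean_space \<times> real \<times> real \<Rightarrow> real) set)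
     \<le> DIM('a) * DIM('a) + DIM('a) + 2"
proof -
  let ?Q = "(\<lambda>(i, j) (x, t, s). (x \<bullet> i) * (x \<bullet> j)) ` (Basis \<times> Basis) :: ('a \<times> real \<times> real \<Rightarrow> real) set"
  let ?L = "(\<lambda>i (x, t, s). t * (x \<bullet> i)) ` Basis :: ('a \<times> real \<times> real \<Rightarrow> real) set"
  let ?C = "{\<lambda>_. 1, \<lambda>(x, t, s). s} :: ('a \<times> real \<times> real \<Rightarrow> real) set"
  have "card (?Q \<union> ?L \<union> ?C) \<le> card ?Q + card ?L + card ?C"
    by (meson add_mono card_Un_le le_trans order_refl)
  also have "\<dots> \<le> DIM('a) * DIM('a) + DIM('a) + 2"
    using card_image_le[of "Basis \<times> Basis"] card_image_le[of Basis]
    by (intro add_mono) (auto simp: card_cartesian_product card_insert_if)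
  finally show ?thesis unfolding quadratic_features_def .
qed

lemma section_form_in_span: "section_form a b \<in> real_fun.span quadratic_features"
proof -
  let ?Q = "\<lambda>i j. \<lambda>(x, t, s). (x \<bullet> i) * (x \<bullet> j)"
  let ?L = "\<lambda>i. \<lambda>(x, t, s). t * (x \<bullet> i)"
  have square: "(a \<bullet> x)\<^sup>2 = (\<Sum>i\<in>Basis. \<Sum>j\<in>Basis. (a \<bullet> i) * (a \<bullet> j) * ((x \<bullet> i) * (x \<bullet> j)))"
    for x :: 'a
    unfolding power2_eq_square euclidean_inner[of a x] sum_product by (simp add: mult_ac)
  have linear: "2 * t * b * (a \<bullet> x) = (\<Sum>i\<in>Basis. 2 * b * (a \<bullet> i) * (t * (x \<bullet> i)))"
    for x :: 'a and t
    unfolding euclidean_inner[of a x] sum_distrib_left by (simp add: mult_ac)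
  have "section_form a b =
      (\<Sum>i\<in>Basis. \<Sum>j\<in>Basis. fun_scale ((a \<bullet> i) * (a \<bullet> j)) (?Q i j))
      + (\<Sum>i\<in>Basis. fun_scale (- 2 * b * (a \<bullet> i)) (?L i))
      + fun_scale (b\<^sup>2) (\<lambda>_. 1) + (\<lambda>(x, t, s). s)"
    by (auto simp: fun_eq_iff section_form_def sum_fun_apply fun_scale_def square linear
        sum_negf[symmetric])
  also have "\<dots> \<in> real_fun.span quadratic_features"
    unfolding quadratic_features_def
    by (intro real_fun.span_add real_fun.span_sum real_fun.span_scale real_fun.span_base)
      (auto simp: fun_scale_def)
  finally show ?thesis .
qed

lemma sphere_graph_adjacency_by_section_form:
  fixes V :: "'v set"
  assumes "is_sphere_graph TYPE('a) V E"
  obtains a :: "'v \<Rightarrow> 'a::euclidean_space" and b where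
    "\<And>u v. u \<in> V \<Longrightarrow> v \<in> V \<Longrightarrow> u \<noteq> v \<Longrightarrow>
       E u v \<longleftrightarrow> section_form (a v) (b v) (a u, b u, (b u)\<^sup>2 - 1) \<le> 0"
proof -
  obtain f :: "'v \<Rightarrow> 'a set" where f: "f ` V \<subseteq> hyperplane_sections"
      "\<forall>u\<in>V. \<forall>v\<in>V. u \<noteq> v \<longrightarrow> (E u v \<longleftrightarrow> f u \<inter> f v \<noteq> {})"
    using assms unfolding is_sphere_graph_def by auto
  have "\<exists>a b. norm a = 1 \<and> \<bar>b\<bar> < 1 \<and> f v = cball 0 1 \<inter> {x. a \<bullet> x = b}"
    if "v \<in> V" for v
  proof -
    have "f v \<in> hyperplane_sections" using f(1) that by blast
    then obtain a b where "norm a = 1" "\<bar>b\<bar> < 1" "f v = cball 0 1 \<inter> {x. a \<bullet> x = b}"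
      by (rule hyperplane_section_normalized)
    then show ?thesis by blast
  qed
  then obtain a b where ab: "\<And>v. v \<in> V \<Longrightarrow>
      norm (a v :: 'a) = 1 \<and> \<bar>b v\<bar> < 1 \<and> f v = cball 0 1 \<inter> {x. a v \<bullet> x = b v}"
    by metis
  have "E u v \<longleftrightarrow> section_form (a v) (b v) (a u, b u, (b u)\<^sup>2 - 1) \<le> 0"
    if "u \<in> V" "v \<in> V" "u \<noteq> v" for u v
  proof -
    have "E u v \<longleftrightarrow> (\<exists>x. norm x \<le> 1 \<and> a u \<bullet> x = b u \<and> a v \<bullet> x = b v)"
      using f(2) that ab[OF that(1)] ab[OF that(2)] by auto
    also have "\<dots> \<longleftrightarrow> (a u \<bullet> a v)\<^sup>2 - 2 * b u * b v * (a u \<bullet> a v) + (b u)\<^sup>2 + (b v)\<^sup>2 \<le> 1"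
      using ab[OF that(1)] ab[OF that(2)] by (intro cball_meets_two_hyperplanes_iff) auto
    also have "\<dots> \<longleftrightarrow> section_form (a v) (b v) (a u, b u, (b u)\<^sup>2 - 1) \<le> 0"
      by (simp add: section_form_def inner_commute algebra_simps)
    finally show ?thesis .
  qed
  then show thesis using that by blast
qed

lemma sphere_graph_misses_neighbourhood:
  fixes V :: "'v set"
  assumes "is_sphere_graph TYPE('a::euclidean_space) V E" "A \<subseteq> V" "finite A"
    and "DIM('a) * DIM('a) + DIM('a) + 2 < card A"
  obtains I where "I \<subseteq> A" "\<And>w. w \<in> V - A \<Longrightarrow> {v\<in>A. E w v} \<noteq> I"
proof -
  obtain a :: "'v \<Rightarrow> 'a" and b where adj: "\<And>u v. u \<in> V \<Longrightarrow> v \<in> V \<Longrightarrow> u \<noteq> v \<Longrightarrow>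
       E u v \<longleftrightarrow> section_form (a v) (b v) (a u, b u, (b u)\<^sup>2 - 1) \<le> 0"
    using sphere_graph_adjacency_by_section_form[OF assms(1)] by metis
  let ?\<phi> = "\<lambda>w. section_form (a w) (b w)"
  have card: "card (quadratic_features :: ('a \<times> real \<times> real \<Rightarrow> real) set) < card A"
    using card_quadratic_features[where 'a='a] assms(4) by linarith
  have span: "?\<phi> ` A \<subseteq> real_fun.span quadratic_features"
    using section_form_in_span by blast
  obtain I where I: "I \<subseteq> A" "\<And>p. {v\<in>A. ?\<phi> v p \<le> 0} \<noteq> I"
    using span_misses_sign_pattern[OF assms(3) finite_quadratic_features card span] by blast
  have "{v\<in>A. E w v} \<noteq> I" if "w \<in> V - A" for w
  proof -
    have "E w v \<longleftrightarrow> ?\<phi> v (a w, b w, (b w)\<^sup>2 - 1) \<le> 0" if "v \<in> A" for v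
      using assms(2) \<open>w \<in> V - A\<close> that by (intro adj) auto
    then have "{v\<in>A. E w v} = {v\<in>A. ?\<phi> v (a w, b w, (b w)\<^sup>2 - 1) \<le> 0}"
      by blast
    then show ?thesis using I(2) by simp
  qed
  then show thesis using that I(1) by blast
qed

definition subset_vertex :: "nat \<Rightarrow> nat set \<Rightarrow> nat" where
  "subset_vertex m S = m + set_encode S"

definition incidence_vertices :: "nat \<Rightarrow> nat set" where
  "incidence_vertices m = {..<m} \<union> subset_vertex m ` Pow {..<m}"

definition incidence_edge :: "nat \<Rightarrow> nat \<Rightarrow> nat \<Rightarrow> bool" where
  "incidence_edge m u v \<longleftrightarrow>
     (\<exists>S\<subseteq>{..<m}. u \<in> S \<and> v = subset_vertex m S \<or> v \<in> S \<and> u = subset_vertex m S)"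

lemma incidence_graph_simple:
  "finite (incidence_vertices m)"
  "incidence_edge m u v \<Longrightarrow> incidence_edge m v u"
  "\<not> incidence_edge m u u"
  "incidence_edge m u v \<Longrightarrow> u \<in> incidence_vertices m \<and> v \<in> incidence_vertices m"
  by (auto simp: incidence_vertices_def incidence_edge_def subset_vertex_def)

lemma incidence_edge_subset_vertex:
  assumes S: "S \<subseteq> {..<m}" and "v < m"
  shows "incidence_edge m (subset_vertex m S) v \<longleftrightarrow> v \<in> S"
proof
  assume "incidence_edge m (subset_vertex m S) v"
  then obtain T where T: "T \<subseteq> {..<m}" "v \<in> T" "set_encode S = set_encode T"
    using \<open>v < m\<close> by (auto simp: incidence_edge_def subset_vertex_def)
  then have "S = T"
    using S by (simp add: set_encode_eq finite_subset)
  then show "v \<in> S" using T(2) by simp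
qed (use assms in \<open>auto simp: incidence_edge_def\<close>)

theorem mainTheorem4:
  assumes "DIM('a::euclidean_space) \<ge> 2"
  shows "\<exists>(V :: nat set) (E :: nat \<Rightarrow> nat \<Rightarrow> bool).
           finite V \<and> (\<forall>u v. E u v \<longrightarrow> E v u) \<and> (\<forall>u. \<not> E u u) \<and>
           (\<forall>u v. E u v \<longrightarrow> u \<in> V \<and> v \<in> V) \<and>
           \<not> is_sphere_graph TYPE('a) V E"
proof -
  \<comment> \<open>The construction works in every dimension.\<close>
  define m where "m = DIM('a) * DIM('a) + DIM('a) + 3"
  have "\<not> is_sphere_graph TYPE('a) (incidence_vertices m) (incidence_edge m)"
  proof
    assume sphere: "is_sphere_graph TYPE('a) (incidence_vertices m) (incidence_edge m)"
    have sub: "{..<m} \<subseteq> incidence_vertices m" by (simp add: incidence_vertices_def)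
    have card: "DIM('a) * DIM('a) + DIM('a) + 2 < card {..<m}" by (simp add: m_def)
    obtain I where I: "I \<subseteq> {..<m}"
        "\<And>w. w \<in> incidence_vertices m - {..<m} \<Longrightarrow> {v\<in>{..<m}. incidence_edge m w v} \<noteq> I"
      using sphere_graph_misses_neighbourhood[OF sphere sub finite_lessThan card] by blast
    have "subset_vertex m I \<in> incidence_vertices m - {..<m}"
      using I(1) by (auto simp: incidence_vertices_def subset_vertex_def)
    moreover have "{v\<in>{..<m}. incidence_edge m (subset_vertex m I) v} = I"
      using I(1) incidence_edge_subset_vertex by auto
    ultimately show False using I(2) by blast
  qed
  then show ?thesis
    using incidence_graph_simple
    by (intro exI[of _ "incidence_vertices m"] exI[of _ "incidence_edge m"]) simp
qed

end
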